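(* Let $\pi_0:Z_0\to Z$ be the minimal resolution of a canonical surface singularity, with exceptional curves $E_1,\dots,E_r$ generating $\mathbf{E}_0\subseteq\operatorname{Pic}Z_0$ and numerical cycle $Z_{\mathrm{num}}$. Let $g:\mathbf{E}_0\to\mathbb{Q}$ be of the form $g(E)=-E^2+\ell(E)$ with $\ell$ linear and $\ell(E_i)\le0$ for all $i$. Then $g(E)>0$ for all nonzero effective $E\in\mathbf{E}_0$ if and only if $g(Z_{\mathrm{num}})>0$.
   Context: The numerical cycle $Z_{\mathrm{num}}$ is the minimal nonzero effective $\pi_0$-exceptional divisor $F$ with $F\cdot E_i\le0$ for all $i$. *)

theory Defs
  imports Complex_Main
begin

text \<open>Combinatorial model of the exceptional configuration of the minimal resolution
of a canonical (= rational double point) surface singularity.  The exceptional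
curves are indexed by a finite type 'i; M i j = E_i . E_j is the intersection matrix.
The lattice E_0 generated by the E_i is identified with 'i => int (coefficients).\<close>

definition isect :: "('i::finite \<Rightarrow> 'i \<Rightarrow> int) \<Rightarrow> ('i \<Rightarrow> int) \<Rightarrow> ('i \<Rightarrow> int) \<Rightarrow> int" where
  "isect M E F = (\<Sum>i\<in>UNIV. \<Sum>j\<in>UNIV. E i * F j * M i j)"

definition curve :: "'i \<Rightarrow> ('i \<Rightarrow> int)" where
  "curve i = (\<lambda>j. if j = i then 1 else 0)"

definition effective :: "('i \<Rightarrow> int) \<Rightarrow> bool" where
  "effective E \<longleftrightarrow> (\<forall>i. 0 \<le> E i)"

text \<open>Exceptional configuration of the minimal resolution of a canonical surface
singularity: smooth rational (-2)-curves, meeting transversally in at most one point,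
with negative definite intersection form and connected exceptional locus.\<close>
definition canonical_config :: "('i::finite \<Rightarrow> 'i \<Rightarrow> int) \<Rightarrow> bool" where
  "canonical_config M \<longleftrightarrow>
     (\<forall>i j. M i j = M j i) \<and>
     (\<forall>i. M i i = -2) \<and>
     (\<forall>i j. i \<noteq> j \<longrightarrow> M i j \<in> {0, 1}) \<and>
     (\<forall>E. E \<noteq> (\<lambda>_. 0) \<longrightarrow> isect M E E < 0) \<and>
     (\<forall>i j. (i, j) \<in> {(a, b). M a b \<noteq> 0}\<^sup>*)"

definition anti_nef :: "('i::finite \<Rightarrow> 'i \<Rightarrow> int) \<Rightarrow> ('i \<Rightarrow> int) \<Rightarrow> bool" where
  "anti_nef M F \<longleftrightarrow> (\<forall>i. isect M F (curve i) \<le> 0)"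

definition numerical_cycle :: "('i::finite \<Rightarrow> 'i \<Rightarrow> int) \<Rightarrow> ('i \<Rightarrow> int) \<Rightarrow> bool" where
  "numerical_cycle M Z \<longleftrightarrow>
     effective Z \<and> Z \<noteq> (\<lambda>_. 0) \<and> anti_nef M Z \<and>
     (\<forall>F. effective F \<and> F \<noteq> (\<lambda>_. 0) \<and> anti_nef M F \<and> (\<forall>i. F i \<le> Z i) \<longrightarrow> F = Z)"

end

theory Submission
  imports Defs
begin

text \<open>Laufer's argument.  Starting from any effective divisor D below an anti-nef
divisor F, repeatedly add a curve E_i with D.E_i > 0; since E_i^2 = -2 and
l(E_i) \<le> 0 this never increases g, and it ends at a nonzero anti-nef divisor, which
is at least Z_num.  So if E \<le> k Z_num, then g E \<ge> g(Z_num + E')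
with E' \<le> (k-1) Z_num effective, and g(Z_num + E') = g Z_num + g E' - 2 Z_num.E'
where Z_num.E' \<le> 0; induction on k gives positivity.\<close>

lemma isect_curve_right: "isect M D (curve i) = (\<Sum>j\<in>UNIV. D j * M j i)"
proof -
  have "\<And>a b j. a * (if j = i then 1 else 0) * b = (if j = i then a * b else (0::int))"
    by simp
  then show ?thesis unfolding isect_def curve_def by simp
qed

lemma isect_expand_right: "isect M A B = (\<Sum>j\<in>UNIV. B j * isect M A (curve j))"
  unfolding isect_curve_right unfolding isect_def
  by (subst sum.swap) (simp add: sum_distrib_left algebra_simps)

lemma isect_add_left: "isect M (\<lambda>i. A i + B i) C = isect M A C + isect M B C"
  unfolding isect_def by (simp add: algebra_simps sum.distrib)

lemma isect_add_right: "isect M C (\<lambda>i. A i + B i) = isect M C A + isect M C B"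
  unfolding isect_def by (simp add: algebra_simps sum.distrib)

lemma isect_scale_left: "isect M (\<lambda>i. c * A i) B = c * isect M A B"
  unfolding isect_def by (simp add: sum_distrib_left algebra_simps)

lemma isect_commute: "(\<And>i j. M i j = M j i) \<Longrightarrow> isect M A B = isect M B A"
  unfolding isect_def by (subst sum.swap) (simp add: algebra_simps)

lemma isect_curve_curve: "isect M (curve i) (curve i) = M i i"
proof -
  have "\<And>b j. (if j = i then 1 else 0) * b = (if j = i then b else (0::int))" by simp
  then show ?thesis unfolding isect_curve_right by (simp add: curve_def)
qed

lemma isect_zero_left: "isect M (\<lambda>_. 0) E = 0"
  unfolding isect_def by simp

lemma isect_nonpos_if_anti_nef:
  assumes "anti_nef M F" and "effective E"
  shows "isect M F E \<le> 0"
  unfolding isect_expand_right[of M F E]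
  using assms by (intro sum_nonpos) (simp add: anti_nef_def effective_def mult_nonneg_nonpos)

lemma anti_nef_scale: "anti_nef M F \<Longrightarrow> anti_nef M (\<lambda>i. int k * F i)"
  unfolding anti_nef_def isect_scale_left by (simp add: mult_nonneg_nonpos)

lemma effective_zero_if_le_zero:
  "effective E \<Longrightarrow> (\<And>i. E i \<le> 0) \<Longrightarrow> E = (\<lambda>_. 0)"
  unfolding effective_def by (simp add: antisym fun_eq_iff)

lemma isect_curve_mono:
  assumes offdiag: "\<And>j k. j \<noteq> k \<Longrightarrow> 0 \<le> M j k"
    and le: "\<And>k. G k \<le> F k" and eq: "G i = F i"
  shows "isect M G (curve i) \<le> isect M F (curve i)"
  unfolding isect_curve_right
proof (rule sum_mono)
  fix k
  show "G k * M k i \<le> F k * M k i"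
    using eq le[of k] offdiag[of k i] by (cases "k = i") (simp_all add: mult_right_mono)
qed

lemma canonical_config_offdiag_nonneg:
  "canonical_config M \<Longrightarrow> i \<noteq> j \<Longrightarrow> 0 \<le> M i j"
  unfolding canonical_config_def by force

text \<open>Connectedness: a curve with coefficient 0 that meets a curve with positive
coefficient has positive intersection with the divisor.\<close>

lemma anti_nef_pos:
  assumes cc: "canonical_config M" and ef: "effective F" and nz: "F \<noteq> (\<lambda>_. 0)"
    and an: "anti_nef M F"
  shows "0 < F i"
proof -
  obtain j where "F j \<noteq> 0" using nz by auto
  then have j: "0 < F j" using ef unfolding effective_def by (simp add: less_le)
  have "(j, i) \<in> {(a, b). M a b \<noteq> 0}\<^sup>*" using cc unfolding canonical_config_def by blast
  then show ?thesis
  proof (induction rule: rtrancl_induct)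
    case base then show ?case using j .
  next
    case (step y z)
    show ?case
    proof (rule ccontr)
      assume "\<not> 0 < F z"
      then have Fz: "F z = 0" using ef unfolding effective_def by (simp add: less_le)
      then have "y \<noteq> z" using step by auto
      then have "0 < M y z" using step canonical_config_offdiag_nonneg[OF cc] by force
      have "\<forall>k\<in>UNIV. 0 \<le> F k * M k z"
        using ef Fz canonical_config_offdiag_nonneg[OF cc] unfolding effective_def
        by (metis mult_eq_0_iff mult_nonneg_nonneg order_refl)
      then have "F y * M y z \<le> (\<Sum>k\<in>UNIV. F k * M k z)" by (intro member_le_sum) auto
      then have "0 < isect M F (curve z)"
        using \<open>0 < M y z\<close> step.IH unfolding isect_curve_right by (smt (verit) mult_pos_pos)
      then show False using an unfolding anti_nef_def by (meson not_le)
    qed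
  qed
qed

text \<open>The componentwise minimum of two anti-nef divisors is anti-nef, so the numerical
cycle lies below every nonzero effective anti-nef divisor.\<close>

lemma numerical_cycle_le:
  assumes cc: "canonical_config M" and nc: "numerical_cycle M Z"
    and ef: "effective F" and nz: "F \<noteq> (\<lambda>_. 0)" and an: "anti_nef M F"
  shows "Z i \<le> F i"
proof -
  define H where "H = (\<lambda>k. min (F k) (Z k))"
  have Zp: "\<And>k. 0 < Z k" using anti_nef_pos[OF cc] nc unfolding numerical_cycle_def by blast
  have Fp: "\<And>k. 0 < F k" using anti_nef_pos[OF cc ef nz an] .
  have "effective H" unfolding effective_def H_def using Zp Fp by (simp add: less_imp_le)
  moreover have "H \<noteq> (\<lambda>_. 0)"
    using Zp Fp unfolding H_def by (metis less_irrefl min_def)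
  moreover have "anti_nef M H"
    unfolding anti_nef_def
  proof
    fix k
    have "isect M H (curve k) \<le> isect M F (curve k) \<or> isect M H (curve k) \<le> isect M Z (curve k)"
    proof (cases "F k \<le> Z k")
      case True
      then have "isect M H (curve k) \<le> isect M F (curve k)"
        by (intro isect_curve_mono) (auto simp: H_def canonical_config_offdiag_nonneg[OF cc])
      then show ?thesis ..
    next
      case False
      then have "isect M H (curve k) \<le> isect M Z (curve k)"
        by (intro isect_curve_mono) (auto simp: H_def canonical_config_offdiag_nonneg[OF cc])
      then show ?thesis ..
    qed
    then show "isect M H (curve k) \<le> 0"
      using an nc unfolding anti_nef_def numerical_cycle_def by (meson order_trans)
  qed
  moreover have "\<forall>k. H k \<le> Z k" unfolding H_def by simp
  ultimately have "H = Z" using nc unfolding numerical_cycle_def by blast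
  then show ?thesis unfolding H_def by (metis min.cobounded1)
qed

locale laufer_function =
  fixes M :: "'i::finite \<Rightarrow> 'i \<Rightarrow> int"
    and l g :: "('i \<Rightarrow> int) \<Rightarrow> rat"
  assumes canonical: "canonical_config M"
    and l_add: "\<And>E F. l (\<lambda>i. E i + F i) = l E + l F"
    and l_curve_nonpos: "\<And>i. l (curve i) \<le> 0"
    and g_eq: "\<And>E. g E = - of_int (isect M E E) + l E"
begin

lemma g_add: "g (\<lambda>i. A i + B i) = g A + g B - 2 * of_int (isect M A B)"
proof -
  have "\<And>i j. M i j = M j i" using canonical unfolding canonical_config_def by auto
  then have "isect M (\<lambda>i. A i + B i) (\<lambda>i. A i + B i) = isect M A A + isect M B B + 2 * isect M A B"
    using isect_commute[of M B A] by (simp add: isect_add_left isect_add_right)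
  then show ?thesis unfolding g_eq l_add by (simp add: algebra_simps)
qed

lemma g_zero: "g (\<lambda>_. 0) = 0"
  using l_add[of "\<lambda>_. 0" "\<lambda>_. 0"] g_eq[of "\<lambda>_. 0"] by (simp add: isect_zero_left)

lemma g_add_curve_le:
  assumes "0 < isect M D (curve i)"
  shows "g (\<lambda>j. D j + curve i j) \<le> g D"
proof -
  have "M i i = -2" using canonical unfolding canonical_config_def by auto
  then have "g (curve i) \<le> 2" using g_eq[of "curve i"] l_curve_nonpos[of i]
    by (simp add: isect_curve_curve)
  moreover have "(1::rat) \<le> of_int (isect M D (curve i))" using assms by simp
  ultimately show ?thesis using g_add[of D "curve i"] by linarith
qed

lemma g_descends_to_anti_nef:
  assumes anF: "anti_nef M F" and DF: "\<And>i. D i \<le> F i"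
  shows "\<exists>D'. anti_nef M D' \<and> (\<forall>i. D i \<le> D' i \<and> D' i \<le> F i) \<and> g D' \<le> g D"
  using DF
proof (induction "\<Sum>i\<in>UNIV. nat (F i - D i)" arbitrary: D rule: less_induct)
  case (less D)
  show ?case
  proof (cases "anti_nef M D")
    case True then show ?thesis using less.prems by (intro exI[of _ D]) auto
  next
    case False
    then obtain i where pos: "0 < isect M D (curve i)" unfolding anti_nef_def by (meson not_le)
    have lt: "D i < F i"
    proof (rule ccontr)
      assume "\<not> D i < F i"
      then have "D i = F i" using less.prems[of i] by simp
      have "isect M D (curve i) \<le> isect M F (curve i)"
        by (rule isect_curve_mono)
          (use \<open>D i = F i\<close> canonical_config_offdiag_nonneg[OF canonical] less.prems in auto)
      then show False using anF pos unfolding anti_nef_def by (meson not_le order_trans)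
    qed
    define D' where "D' = (\<lambda>j. D j + curve i j)"
    have D'F: "\<And>j. D' j \<le> F j" using lt less.prems by (simp add: D'_def curve_def)
    have "(\<Sum>j\<in>UNIV. nat (F j - D' j)) < (\<Sum>j\<in>UNIV. nat (F j - D j))"
      by (rule sum_strict_mono_ex1) (use lt in \<open>auto simp: D'_def curve_def\<close>)
    then obtain D'' where D'': "anti_nef M D''" "\<forall>j. D' j \<le> D'' j \<and> D'' j \<le> F j" "g D'' \<le> g D'"
      using less.hyps D'F by blast
    have "g D' \<le> g D" unfolding D'_def using g_add_curve_le[OF pos] .
    moreover have "\<forall>j. D j \<le> D' j" by (simp add: D'_def curve_def)
    ultimately show ?thesis using D'' by (meson order_trans)
  qed
qed

lemma g_pos_below_multiple:
  assumes nc: "numerical_cycle M Z" and gZ: "0 < g Z"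
  shows "effective E \<Longrightarrow> E \<noteq> (\<lambda>_. 0) \<Longrightarrow> (\<And>i. E i \<le> int k * Z i) \<Longrightarrow> 0 < g E"
proof (induction k arbitrary: E)
  case 0
  then show ?case using effective_zero_if_le_zero by force
next
  case (Suc k E)
  have Zan: "anti_nef M Z" using nc unfolding numerical_cycle_def by blast
  obtain Es where Es: "anti_nef M Es" "\<forall>i. E i \<le> Es i \<and> Es i \<le> int (Suc k) * Z i" "g Es \<le> g E"
    using g_descends_to_anti_nef[OF anti_nef_scale[OF Zan]] Suc.prems(3) by blast
  have "effective Es" using Es(2) Suc.prems(1) unfolding effective_def by (meson order_trans)
  moreover have "Es \<noteq> (\<lambda>_. 0)" using Es(2) Suc.prems(1,2) effective_zero_if_le_zero by force
  ultimately have ZEs: "\<And>i. Z i \<le> Es i" using numerical_cycle_le[OF canonical nc _ _ Es(1)] by blast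
  define E' where "E' = (\<lambda>i. Es i - Z i)"
  have E'eff: "effective E'" using ZEs unfolding E'_def effective_def by simp
  have "0 \<le> g E'"
  proof (cases "E' = (\<lambda>_. 0)")
    case True then show ?thesis using g_zero by simp
  next
    case False
    have "\<And>i. E' i \<le> int k * Z i" using Es(2) unfolding E'_def by (simp add: algebra_simps)
    then show ?thesis using Suc.IH[OF E'eff False] by simp
  qed
  moreover have "(of_int (isect M Z E') :: rat) \<le> 0" using isect_nonpos_if_anti_nef[OF Zan E'eff] by simp
  moreover have "g Es = g Z + g E' - 2 * of_int (isect M Z E')"
    using g_add[of Z E'] unfolding E'_def by simp
  ultimately show ?case using gZ Es(3) by linarith
qed

end

lemma effective_le_multiple:
  fixes E Z :: "'i::finite \<Rightarrow> int"
  assumes "effective E" and Zpos: "\<And>i. 0 < Z i"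
  shows "\<exists>k. \<forall>i. E i \<le> int k * Z i"
proof (intro exI allI)
  fix i
  have "E i \<le> (\<Sum>j\<in>UNIV. E j)" by (rule member_le_sum) (use assms in \<open>auto simp: effective_def\<close>)
  also have "\<dots> = int (nat (\<Sum>j\<in>UNIV. E j))" using assms(1) by (simp add: effective_def sum_nonneg)
  also have "\<dots> \<le> int (nat (\<Sum>j\<in>UNIV. E j)) * Z i"
    using Zpos[of i] by (simp add: mult_le_cancel_left1)
  finally show "E i \<le> int (nat (\<Sum>j\<in>UNIV. E j)) * Z i" .
qed

theorem mainTheorem12:
  fixes M :: "'i::finite \<Rightarrow> 'i \<Rightarrow> int"
    and l :: "('i \<Rightarrow> int) \<Rightarrow> rat"
    and g :: "('i \<Rightarrow> int) \<Rightarrow> rat"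
    and Znum :: "'i \<Rightarrow> int"
  assumes "canonical_config M"
    and "numerical_cycle M Znum"
    and "\<And>E F. l (\<lambda>i. E i + F i) = l E + l F"
    and "\<And>i. l (curve i) \<le> 0"
    and "\<And>E. g E = - of_int (isect M E E) + l E"
  shows "(\<forall>E. effective E \<and> E \<noteq> (\<lambda>_. 0) \<longrightarrow> g E > 0) \<longleftrightarrow> g Znum > 0"
proof
  assume "\<forall>E. effective E \<and> E \<noteq> (\<lambda>_. 0) \<longrightarrow> g E > 0"
  then show "g Znum > 0" using assms(2) unfolding numerical_cycle_def by blast
next
  assume gZ: "g Znum > 0"
  interpret laufer_function M l g using assms(1,3-5) by unfold_locales
  have "\<And>i. 0 < Znum i"
    using anti_nef_pos[OF assms(1)] assms(2) unfolding numerical_cycle_def by blast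
  show "\<forall>E. effective E \<and> E \<noteq> (\<lambda>_. 0) \<longrightarrow> g E > 0"
  proof (intro allI impI)
    fix E :: "'i \<Rightarrow> int" assume "effective E \<and> E \<noteq> (\<lambda>_. 0)"
    moreover obtain k where "\<forall>i. E i \<le> int k * Znum i"
      using effective_le_multiple \<open>\<And>i. 0 < Znum i\<close> calculation by blast
    ultimately show "g E > 0" using g_pos_below_multiple[OF assms(2) gZ] by blast
  qed
qed

end
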